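(* Let $\mu_\varepsilon$ be a Borel probability measure on $\mathbb{R}$ and $\eta\in\mathcal{M}(\mathbb{R},\mathcal{B}(\mathbb{R}))$. If $\mu_\varepsilon$ or $\eta$ is continuous (has no atoms), then $|\pi_{\eta*\mu_\varepsilon}|(\mathbb{R})\ge1$.
   Context: $\mathcal{M}(\mathbb{R},\mathcal{B}(\mathbb{R}))$ is the space of finite signed Borel measures on $\mathbb{R}$; $|\cdot|$ denotes total variation. $(\mu*\nu)(A):=\int\int\mathbf 1_A(x+y)\nu(dx)\mu(dy)$. $\pi_{\eta*\mu_\varepsilon}:=\delta_{\{0\}}-\eta*\mu_\varepsilon$. *)

theory Defs
  imports "HOL-Probability.Probability"
begin

text \<open>A finite signed Borel measure on the reals is represented by a pair (P, N) of finite
Borel measures via its value  eta A = P(A) - N(A)  (every finite signed measure arises this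
way, e.g. from its Jordan decomposition).\<close>

definition signed_val :: "real measure \<Rightarrow> real measure \<Rightarrow> real set \<Rightarrow> real" where
  "signed_val P N A = measure P A - measure N A"

definition sconv :: "real measure \<Rightarrow> real measure \<Rightarrow> real measure \<Rightarrow> real set \<Rightarrow> real" where
  "sconv P N M A =
     (\<integral>y. (\<integral>x. indicator A (x + y) \<partial>M) \<partial>P) - (\<integral>y. (\<integral>x. indicator A (x + y) \<partial>M) \<partial>N)"

definition pi_conv :: "real measure \<Rightarrow> real measure \<Rightarrow> real measure \<Rightarrow> real set \<Rightarrow> real" where
  "pi_conv P N M A = indicator A (0::real) - sconv P N M A"

definition total_variation_R :: "(real set \<Rightarrow> real) \<Rightarrow> ereal" where
  "total_variation_R f = (SUP \<A> \<in> {\<A>. finite \<A> \<and> \<A> \<subseteq> sets borel \<and> disjoint \<A>}.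
        ereal (\<Sum>A\<in>\<A>. \<bar>f A\<bar>))"

end

theory Submission
  imports Defs
begin

text \<open>Evaluate the convolution on the Borel set \<open>{0}\<close>: it is the integral of the point masses
  \<open>\<eta>{-x}\<close> against \<open>\<mu>(dx)\<close>, and by Fubini also of \<open>\<mu>{-y}\<close> against \<open>\<eta>(dy)\<close>. If either
  measure has no atoms the integrand vanishes, so \<open>\<pi>({0}) = 1 - 0 = 1\<close>, and the total variation
  dominates \<open>|\<pi>({0})|\<close>.\<close>

lemma integral_indicator_singleton_shift:
  fixes M :: "real measure"
  assumes "sets M = sets borel"
  shows "(\<integral>x. indicator {a} (x + y) \<partial>M) = measure M {a - y}"
proof -
  have "(\<lambda>x. indicator {a} (x + y) :: real) = indicator {a - y}"
    by (auto simp: indicator_def fun_eq_iff)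
  then show ?thesis
    using sets_eq_imp_space_eq[OF assms] by simp
qed

lemma integral_measure_singleton_shift_commute:
  fixes M P :: "real measure"
  assumes "finite_measure M" "sets M = sets borel" "finite_measure P" "sets P = sets borel"
  shows "(\<integral>y. measure M {a - y} \<partial>P) = (\<integral>x. measure P {a - x} \<partial>M)"
proof -
  interpret M: finite_measure M by fact
  interpret P: finite_measure P by fact
  interpret MP: pair_sigma_finite M P ..
  interpret MP_finite: finite_measure "M \<Otimes>\<^sub>M P"
    by (rule finite_measure_pair_measure) fact+
  let ?f = "\<lambda>(x, y). indicator {a} (x + y) :: real"
  have "sets (M \<Otimes>\<^sub>M P) = sets (borel \<Otimes>\<^sub>M borel)"
    by (rule sets_pair_measure_cong) (use assms in auto)
  moreover have "?f \<in> borel_measurable (borel \<Otimes>\<^sub>M borel)"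
    by measurable
  ultimately have "?f \<in> borel_measurable (M \<Otimes>\<^sub>M P)"
    using measurable_cong_sets by blast
  then have "integrable (M \<Otimes>\<^sub>M P) ?f"
    by (intro MP_finite.integrable_const_bound[where B = 1]) (auto simp: indicator_def)
  from MP.Fubini_integral[OF this]
  have "(\<integral>y. (\<integral>x. indicator {a} (x + y) \<partial>M) \<partial>P) =
      (\<integral>x. (\<integral>y. (indicator {a} (y + x) :: real) \<partial>P) \<partial>M)"
    by (simp add: add.commute)
  then show ?thesis
    using assms by (simp add: integral_indicator_singleton_shift)
qed

lemma sconv_singleton_eq_0:
  fixes M P N :: "real measure"
  assumes "finite_measure M" "sets M = sets borel"
    and "finite_measure P" "sets P = sets borel"
    and "finite_measure N" "sets N = sets borel"
    and "(\<forall>x. measure M {x} = 0) \<or> (\<forall>x. signed_val P N {x} = 0)"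
  shows "sconv P N M {a} = 0"
  using assms(7)
proof
  assume "\<forall>x. measure M {x} = 0"
  then show ?thesis
    by (simp add: sconv_def integral_indicator_singleton_shift[OF assms(2)])
next
  assume "\<forall>x. signed_val P N {x} = 0"
  then have "measure P {a - x} = measure N {a - x}" for x
    by (simp add: signed_val_def)
  then show ?thesis
    using assms by (simp add: sconv_def integral_indicator_singleton_shift
        integral_measure_singleton_shift_commute)
qed

lemma abs_le_total_variation_R:
  assumes "A \<in> sets borel"
  shows "ereal \<bar>f A\<bar> \<le> total_variation_R f"
proof -
  have "{A} \<in> {\<A>. finite \<A> \<and> \<A> \<subseteq> sets borel \<and> disjoint \<A>}"
    using assms by (auto simp: disjoint_def)
  then have "ereal (\<Sum>B\<in>{A}. \<bar>f B\<bar>) \<le> total_variation_R f"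
    unfolding total_variation_R_def by (rule SUP_upper)
  then show ?thesis by simp
qed

theorem lemma7:
  fixes M P N :: "real measure"
  assumes "prob_space M" and "sets M = sets borel"
    and "finite_measure P" and "sets P = sets borel"
    and "finite_measure N" and "sets N = sets borel"
    and "(\<forall>x. measure M {x} = 0) \<or> (\<forall>x. signed_val P N {x} = 0)"
  shows "total_variation_R (pi_conv P N M) \<ge> 1"
proof -
  have "finite_measure M"
    using assms(1) by (simp add: prob_space_def)
  then have "pi_conv P N M {0} = 1"
    using assms by (simp add: pi_conv_def sconv_singleton_eq_0)
  then show ?thesis
    using abs_le_total_variation_R[of "{0}" "pi_conv P N M"] by (simp add: one_ereal_def)
qed

end
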